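(* Let $n\geq 2$. $\mathrm{Aut}(\mathbf{D}_n)$ acts continuously and transitively on $\mathcal{R}_n$ via the logic action $g\cdot(\prec_1,\ldots,\prec_n)=(\prec_1^g,\ldots,\prec_n^g)$, where $\mathbf{a}\prec_i^g\mathbf{b}$ iff $g^{-1}(\mathbf{a})\prec_ig^{-1}(\mathbf{b})$, for all $i\leq n$, $\mathbf{a},\mathbf{b}\in D_n$ and $g\in\mathrm{Aut}(\mathbf{D}_n)$ (in particular this action maps $\mathcal{R}_n$ into itself).
   Context: Fix $n\geq 2$ and a set $D_n\subseteq\mathbb{Q}^n$ which is dense in $\mathbb{Q}^n$ (product topology) and such that no two distinct points of $D_n$ share a common coordinate. $\mathbf{D}_n=(D_n,<)$ with $<$ the product order ($\mathbf{a}<\mathbf{b}$ iff $a_i\leq b_i$ for all $i$ and $\mathbf{a}\neq\mathbf{b}$); $\mathrm{Aut}(\mathbf{D}_n)$ carries the topology of pointwise convergence. $\mathcal{R}_n$ is the set of $n$-tuples $(\prec_1,\ldots,\prec_n)$ of strict linear orders on $D_n$ with $\prec_1\cap\cdots\cap\prec_n\;=\;<$, topologized as a subspace of $(\{0,1\}^{D_n^2})^n$. *)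

theory Defs
  imports "HOL-Analysis.Analysis"
begin

text \<open>Points of Q^n are functions from a finite index type 'n (with CARD('n) = n) to rat.\<close>

definition prod_less :: "('n \<Rightarrow> rat) \<Rightarrow> ('n \<Rightarrow> rat) \<Rightarrow> bool" where
  "prod_less a b \<longleftrightarrow> (\<forall>i. a i \<le> b i) \<and> a \<noteq> b"

definition prod_order_rel :: "('n \<Rightarrow> rat) set \<Rightarrow> ('n \<Rightarrow> rat) rel" where
  "prod_order_rel D = {(a, b). a \<in> D \<and> b \<in> D \<and> prod_less a b}"

definition dense_in_Qn :: "('n \<Rightarrow> rat) set \<Rightarrow> bool" where
  "dense_in_Qn D \<longleftrightarrow> (\<forall>a b. (\<forall>i. a i < b i) \<longrightarrow> (\<exists>d\<in>D. \<forall>i. a i < d i \<and> d i < b i))"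

definition no_common_coord :: "('n \<Rightarrow> rat) set \<Rightarrow> bool" where
  "no_common_coord D \<longleftrightarrow> (\<forall>x\<in>D. \<forall>y\<in>D. x \<noteq> y \<longrightarrow> (\<forall>i. x i \<noteq> y i))"

definition Aut :: "('n \<Rightarrow> rat) set \<Rightarrow> (('n \<Rightarrow> rat) \<Rightarrow> ('n \<Rightarrow> rat)) set" where
  "Aut D = {g. bij_betw g D D \<and> (\<forall>x. x \<notin> D \<longrightarrow> g x = x) \<and>
                (\<forall>a\<in>D. \<forall>b\<in>D. prod_less a b \<longleftrightarrow> prod_less (g a) (g b))}"

text \<open>Topology of pointwise convergence on Aut(D) (D discrete).\<close>
definition Aut_topology :: "('n \<Rightarrow> rat) set \<Rightarrow> (('n \<Rightarrow> rat) \<Rightarrow> ('n \<Rightarrow> rat)) topology" where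
  "Aut_topology D = pullback_topology (Aut D) (\<lambda>g. restrict g D)
      (product_topology (\<lambda>_. discrete_topology D) D)"

text \<open>Topology on relations on D, identified with {0,1}^(D^2) via indicator functions.\<close>
definition rel_topology :: "'a set \<Rightarrow> 'a rel topology" where
  "rel_topology D = pullback_topology {r. r \<subseteq> D \<times> D} (\<lambda>r. restrict (\<lambda>p. p \<in> r) (D \<times> D))
      (product_topology (\<lambda>_. discrete_topology UNIV) (D \<times> D))"

definition Rn :: "('n \<Rightarrow> rat) set \<Rightarrow> ('n \<Rightarrow> ('n \<Rightarrow> rat) rel) set" where
  "Rn D = {R. (\<forall>i. R i \<subseteq> D \<times> D \<and> strict_linear_order_on D (R i)) \<and>
              (\<Inter>i. R i) = prod_order_rel D}"

definition Rn_topology :: "('n \<Rightarrow> rat) set \<Rightarrow> ('n \<Rightarrow> ('n \<Rightarrow> rat) rel) topology" where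
  "Rn_topology D = subtopology (product_topology (\<lambda>_. rel_topology D) UNIV) (Rn D)"

definition logic_action :: "(('n \<Rightarrow> rat) \<Rightarrow> ('n \<Rightarrow> rat)) \<Rightarrow> ('n \<Rightarrow> ('n \<Rightarrow> rat) rel) \<Rightarrow> ('n \<Rightarrow> ('n \<Rightarrow> rat) rel)" where
  "logic_action g R = (\<lambda>i. {(a, b). (inv g a, inv g b) \<in> R i})"

end

theory Submission
  imports Defs
begin

(* Every R in R_n is a tuple of coordinate orders up to a permutation t of the indices:
   R i relates a and b iff a (t i) < b (t i). Call (a, b) j-flipped if b lies above a in
   every coordinate except the j-th. Such a pair is incomparable in the product order, so
   some order of R reverses it. By density there are n flipped pairs, one for each
   coordinate, any two of which are separated in the product order, so that no order
   reverses two of them; by pigeonhole each one is reversed by exactly one order. Comparing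
   flipped pairs that lie inside one another shows that this order depends only on j, and
   that it is the j-th coordinate order.

   Transitivity therefore reduces to finding, for each permutation p of the coordinates, an
   automorphism of D that sends the j-th coordinate order to the (p j)-th one. It is built
   by a back-and-forth argument, which goes through because D is countable and dense and no
   two of its points share a coordinate. Continuity holds because whether g.R relates a and
   b depends only on the values of g at the preimages of a and b and on R at that single
   pair. *)

definition compatible_pairs :: "('a \<Rightarrow> 'a \<Rightarrow> 'b \<Rightarrow> 'b \<Rightarrow> bool) \<Rightarrow> ('a \<times> 'b) set \<Rightarrow> bool" where
  "compatible_pairs Q P \<longleftrightarrow> (\<forall>(x, y)\<in>P. \<forall>(x', y')\<in>P. Q x x' y y')"

lemma compatible_pairs_insert:
  "compatible_pairs Q (insert (x, y) P) \<longleftrightarrow>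
     Q x x y y \<and> (\<forall>(x', y')\<in>P. Q x x' y y' \<and> Q x' x y' y) \<and> compatible_pairs Q P"
  unfolding compatible_pairs_def by auto

lemma compatible_pairs_converse:
  "compatible_pairs (\<lambda>y y' x x'. Q x x' y y') (converse P) \<longleftrightarrow> compatible_pairs Q P"
  unfolding compatible_pairs_def by fast

lemma compatible_pairs_UN_incseq:
  assumes "incseq S" "\<And>k. compatible_pairs Q (S k)"
  shows "compatible_pairs Q (\<Union>k. S k)"
  unfolding compatible_pairs_def
proof clarsimp
  fix x y x' y' k l
  assume "(x, y) \<in> S k" "(x', y') \<in> S l"
  then have "(x, y) \<in> S (max k l)" "(x', y') \<in> S (max k l)"
    using monoD[OF \<open>incseq S\<close>, of k "max k l"] monoD[OF \<open>incseq S\<close>, of l "max k l"] by auto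
  then show "Q x x' y y'"
    using assms(2) unfolding compatible_pairs_def by blast
qed

lemma countable_back_and_forth_relation:
  assumes "countable A" "countable B" "A \<noteq> {}" "B \<noteq> {}"
    and extend_domain: "\<And>P x. finite P \<Longrightarrow> P \<subseteq> A \<times> B \<Longrightarrow> compatible_pairs Q P \<Longrightarrow> x \<in> A \<Longrightarrow>
      \<exists>y\<in>B. compatible_pairs Q (insert (x, y) P)"
    and extend_range: "\<And>P y. finite P \<Longrightarrow> P \<subseteq> A \<times> B \<Longrightarrow> compatible_pairs Q P \<Longrightarrow> y \<in> B \<Longrightarrow>
      \<exists>x\<in>A. compatible_pairs Q (insert (x, y) P)"
  shows "\<exists>H. H \<subseteq> A \<times> B \<and> Domain H = A \<and> Range H = B \<and> compatible_pairs Q H"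
proof -
  define good where "good P \<longleftrightarrow> finite P \<and> P \<subseteq> A \<times> B \<and> compatible_pairs Q P" for P
  obtain fw where fw: "\<And>P x. good P \<Longrightarrow> x \<in> A \<Longrightarrow> good (insert (x, fw P x) P)"
    using extend_domain unfolding good_def by (metis finite_insert insert_subset mem_Sigma_iff)
  obtain bw where bw: "\<And>P y. good P \<Longrightarrow> y \<in> B \<Longrightarrow> good (insert (bw P y, y) P)"
    using extend_range unfolding good_def by (metis finite_insert insert_subset mem_Sigma_iff)
  define a where "a = from_nat_into A"
  define b where "b = from_nat_into B"
  have a: "a k \<in> A" and b: "b k \<in> B" for k
    unfolding a_def b_def using assms(3,4) by (simp_all add: from_nat_into)
  \<comment> \<open>stage k gives the k-th elements of A and B a partner\<close>
  define step where "step k P = (let P' = insert (a k, fw P (a k)) P in insert (bw P' (b k), b k) P')" for k P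
  define S where "S = rec_nat {} step"
  have S_Suc: "S (Suc k) = step k (S k)" for k
    unfolding S_def by simp
  have good_S: "good (S k)" for k
  proof (induction k)
    case 0
    then show ?case
      by (simp add: S_def good_def compatible_pairs_def)
  next
    case (Suc k)
    then show ?case
      by (simp add: S_Suc step_def Let_def fw bw a b)
  qed
  have "incseq S"
    by (rule incseq_SucI) (auto simp: S_Suc step_def Let_def)
  define H where "H = (\<Union>k. S k)"
  have "(a k, fw (S k) (a k)) \<in> S (Suc k)" "(bw (insert (a k, fw (S k) (a k)) (S k)) (b k), b k) \<in> S (Suc k)" for k
    by (simp_all add: S_Suc step_def Let_def)
  then have "a k \<in> Domain H" and "b k \<in> Range H" for k
    unfolding H_def by blast+
  then have "A \<subseteq> Domain H" "B \<subseteq> Range H"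
    unfolding a_def b_def using assms(1-4) by (metis from_nat_into_surj subsetI)+
  moreover have "H \<subseteq> A \<times> B"
    using good_S unfolding H_def good_def by blast
  moreover have "compatible_pairs Q H"
    unfolding H_def using \<open>incseq S\<close> good_S good_def by (blast intro: compatible_pairs_UN_incseq)
  ultimately show ?thesis
    by blast
qed

lemma bij_betw_of_relation:
  assumes H: "H \<subseteq> A \<times> B" "Domain H = A" "Range H = B"
    and H_eq: "\<And>x y x' y'. (x, y) \<in> H \<Longrightarrow> (x', y') \<in> H \<Longrightarrow> x = x' \<longleftrightarrow> y = y'"
  shows "\<exists>h. bij_betw h A B \<and> (\<forall>x\<in>A. (x, h x) \<in> H)"
proof -
  define h where "h x = (THE y. (x, y) \<in> H)" for x
  have h: "(x, h x) \<in> H" if "x \<in> A" for x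
  proof -
    obtain y where y: "(x, y) \<in> H"
      using \<open>x \<in> A\<close> H(2) by blast
    have "h x = y"
      unfolding h_def
    proof (rule the_equality)
      show "(x, y) \<in> H" by (fact y)
      show "y' = y" if "(x, y') \<in> H" for y'
        using H_eq[OF that y] by simp
    qed
    then show ?thesis
      using y by simp
  qed
  have "inj_on h A"
    by (rule inj_onI) (use H_eq[OF h h] in simp)
  moreover have "h ` A = B"
  proof
    show "h ` A \<subseteq> B"
      using h H(1) by blast
    show "B \<subseteq> h ` A"
    proof
      fix y
      assume "y \<in> B"
      then obtain x where x: "(x, y) \<in> H" "x \<in> A"
        using H(1,3) by blast
      then have "h x = y"
        using H_eq[OF h[OF \<open>x \<in> A\<close>] x(1)] by simp
      then show "y \<in> h ` A"
        using x(2) by blast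
    qed
  qed
  ultimately show ?thesis
    unfolding bij_betw_def using h by blast
qed

lemma bij_betw_of_compatible_relation:
  assumes H: "H \<subseteq> A \<times> B" "Domain H = A" "Range H = B" "compatible_pairs Q H"
    and Q_inj: "\<And>x x' y y'. x \<in> A \<Longrightarrow> x' \<in> A \<Longrightarrow> y \<in> B \<Longrightarrow> y' \<in> B \<Longrightarrow>
      Q x x' y y' \<Longrightarrow> Q x' x y' y \<Longrightarrow> x = x' \<longleftrightarrow> y = y'"
  shows "\<exists>h. bij_betw h A B \<and> (\<forall>x\<in>A. \<forall>x'\<in>A. Q x x' (h x) (h x'))"
proof -
  have Q_H: "Q x x' y y'" if "(x, y) \<in> H" "(x', y') \<in> H" for x y x' y'
    using H(4) that unfolding compatible_pairs_def by blast
  have "x = x' \<longleftrightarrow> y = y'" if "(x, y) \<in> H" "(x', y') \<in> H" for x y x' y'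
  proof -
    have "x \<in> A" "x' \<in> A" "y \<in> B" "y' \<in> B"
      using that H(1) by auto
    then show ?thesis
      using Q_inj Q_H[OF that] Q_H[OF that(2,1)] by simp
  qed
  then obtain h where "bij_betw h A B" "\<forall>x\<in>A. (x, h x) \<in> H"
    using bij_betw_of_relation[OF H(1-3)] by blast
  then show ?thesis
    using Q_H by blast
qed

lemma countable_back_and_forth:
  assumes "countable A" "countable B" "A \<noteq> {}" "B \<noteq> {}"
    and "\<And>P x. finite P \<Longrightarrow> P \<subseteq> A \<times> B \<Longrightarrow> compatible_pairs Q P \<Longrightarrow> x \<in> A \<Longrightarrow>
      \<exists>y\<in>B. compatible_pairs Q (insert (x, y) P)"
    and "\<And>P y. finite P \<Longrightarrow> P \<subseteq> A \<times> B \<Longrightarrow> compatible_pairs Q P \<Longrightarrow> y \<in> B \<Longrightarrow>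
      \<exists>x\<in>A. compatible_pairs Q (insert (x, y) P)"
    and "\<And>x x' y y'. x \<in> A \<Longrightarrow> x' \<in> A \<Longrightarrow> y \<in> B \<Longrightarrow> y' \<in> B \<Longrightarrow>
      Q x x' y y' \<Longrightarrow> Q x' x y' y \<Longrightarrow> x = x' \<longleftrightarrow> y = y'"
  shows "\<exists>h. bij_betw h A B \<and> (\<forall>x\<in>A. \<forall>x'\<in>A. Q x x' (h x) (h x'))"
proof -
  obtain H where "H \<subseteq> A \<times> B" "Domain H = A" "Range H = B" "compatible_pairs Q H"
    using countable_back_and_forth_relation[OF assms(1-6)] by blast
  from bij_betw_of_compatible_relation[OF this assms(7)] show ?thesis .
qed

lemma finite_sets_separated:
  fixes S T :: "'a :: {linorder, no_top, no_bot} set"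
  assumes "finite S" "finite T" "\<forall>s\<in>S. \<forall>t\<in>T. s < t"
  shows "\<exists>l h. l < h \<and> (\<forall>s\<in>S. s \<le> l) \<and> (\<forall>t\<in>T. h \<le> t)"
proof (cases "S = {}"; cases "T = {}")
  assume "S = {}" "T = {}"
  then show ?thesis
    using gt_ex by blast
next
  assume "S = {}" "T \<noteq> {}"
  obtain l where "l < Min T"
    using lt_ex by blast
  then show ?thesis
    using \<open>S = {}\<close> assms(2) by (intro exI[of _ l] exI[of _ "Min T"]) auto
next
  assume "S \<noteq> {}" "T = {}"
  obtain h where "Max S < h"
    using gt_ex by blast
  then show ?thesis
    using \<open>T = {}\<close> assms(1) by (intro exI[of _ "Max S"] exI[of _ h]) auto
next
  assume "S \<noteq> {}" "T \<noteq> {}"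
  then show ?thesis
    using assms by (intro exI[of _ "Max S"] exI[of _ "Min T"]) auto
qed

lemma dense_in_QnE:
  assumes "dense_in_Qn D" "\<And>k. lo k < hi k"
  obtains d where "d \<in> D" "\<And>k. lo k < d k" "\<And>k. d k < hi k"
  using assms unfolding dense_in_Qn_def by blast

lemma dense_in_Qn_nonempty: "dense_in_Qn D \<Longrightarrow> D \<noteq> {}"
  using dense_in_QnE[of D "\<lambda>_. 0" "\<lambda>_. 1"] by force

lemma dense_in_Qn_single_coord:
  assumes "dense_in_Qn D" "l < h" "l' < h'"
  shows "\<exists>d\<in>D. l < d k \<and> d k < h \<and> (\<forall>m. m \<noteq> k \<longrightarrow> l' < d m \<and> d m < h')"
proof -
  have "(if m = k then l else l') < (if m = k then h else h')" for m
    using assms(2,3) by simp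
  from dense_in_QnE[of D "\<lambda>m. if m = k then l else l'" "\<lambda>m. if m = k then h else h'", OF assms(1) this]
  obtain d where "d \<in> D" "\<And>m. (if m = k then l else l') < d m" "\<And>m. d m < (if m = k then h else h')"
    by blast
  then show ?thesis
    by (metis (full_types))
qed

lemma strict_bounds_finite:
  fixes a b :: "'n::finite \<Rightarrow> rat"
  obtains L H where "\<And>m. L < a m \<and> L < b m" "\<And>m. a m < H \<and> b m < H"
proof
  fix m
  have "Min (range a \<union> range b) \<le> a m" "Min (range a \<union> range b) \<le> b m"
    "a m \<le> Max (range a \<union> range b)" "b m \<le> Max (range a \<union> range b)"
    by (auto intro!: Min_le Max_ge)
  then show "Min (range a \<union> range b) - 1 < a m \<and> Min (range a \<union> range b) - 1 < b m"
    "a m < Max (range a \<union> range b) + 1 \<and> b m < Max (range a \<union> range b) + 1"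
    by linarith+
qed

lemma prod_less_iff_less_all:
  assumes "no_common_coord D" "a \<in> D" "b \<in> D"
  shows "prod_less a b \<longleftrightarrow> (\<forall>k. a k < b k)"
  using assms unfolding prod_less_def no_common_coord_def
  by (metis dual_order.order_iff_strict less_irrefl)

lemma Aut_mem_iff:
  assumes "g \<in> Aut D"
  shows "g x \<in> D \<longleftrightarrow> x \<in> D"
  using assms unfolding Aut_def by (cases "x \<in> D") (auto dest: bij_betwE)

lemma Aut_bij:
  assumes "g \<in> Aut D"
  shows "bij g"
proof -
  have "bij_betw g D D" "\<And>x. x \<notin> D \<Longrightarrow> g x = x"
    using assms unfolding Aut_def by auto
  moreover from this(2) have "bij_betw g (- D) (- D) \<longleftrightarrow> bij_betw id (- D) (- D)"
    by (intro bij_betw_cong) simp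
  then have "bij_betw g (- D) (- D)"
    by simp
  ultimately have "bij_betw g (D \<union> - D) (D \<union> - D)"
    by (intro bij_betw_combine) auto
  then show ?thesis
    by simp
qed

lemma inv_Aut:
  assumes "g \<in> Aut D"
  shows "inv g \<in> Aut D"
proof -
  have "bij g" and gD: "bij_betw g D D"
    using assms Aut_bij unfolding Aut_def by auto
  then have g_inv: "g (inv g x) = x" "inv g (g x) = x" for x
    by (simp_all add: bij_is_surj bij_is_inj surj_f_inv_f)
  have "bij_betw (inv g) D D"
    using bij_betw_inv_into_subset[OF \<open>bij g\<close> subset_UNIV bij_betw_imp_surj_on[OF gD]] .
  moreover have "inv g x = x" if "x \<notin> D" for x
  proof -
    have "g x = x"
      using assms that unfolding Aut_def by blast
    then show ?thesis
      using g_inv(2)[of x] by simp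
  qed
  moreover have "prod_less a b \<longleftrightarrow> prod_less (inv g a) (inv g b)" if "a \<in> D" "b \<in> D" for a b
  proof -
    have "inv g a \<in> D" "inv g b \<in> D"
      using \<open>bij_betw (inv g) D D\<close> that by (auto dest: bij_betwE)
    then have "prod_less (inv g a) (inv g b) \<longleftrightarrow> prod_less (g (inv g a)) (g (inv g b))"
      using assms unfolding Aut_def by blast
    then show ?thesis
      by (simp add: g_inv)
  qed
  ultimately show ?thesis
    unfolding Aut_def by blast
qed

lemma Rn_pullback:
  assumes h: "h \<in> Aut D" and R: "R \<in> Rn D"
  shows "(\<lambda>i. {(a, b). (h a, h b) \<in> R i}) \<in> Rn D"
proof -
  have h_mem: "h x \<in> D \<longleftrightarrow> x \<in> D" for x
    using h by (rule Aut_mem_iff)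
  have "inj h"
    using Aut_bij[OF h] by (rule bij_is_inj)
  have R_sub: "R i \<subseteq> D \<times> D" and "strict_linear_order_on D (R i)" for i
    using R unfolding Rn_def by auto
  then have R_trans: "trans (R i)" and R_irrefl: "irrefl (R i)" and R_total: "total_on D (R i)" for i
    unfolding strict_linear_order_on_def by auto
  have "{(a, b). (h a, h b) \<in> R i} \<subseteq> D \<times> D" for i
    using R_sub[of i] by (auto simp: h_mem)
  moreover have "strict_linear_order_on D {(a, b). (h a, h b) \<in> R i}" for i
    unfolding strict_linear_order_on_def
  proof (intro conjI)
    show "trans {(a, b). (h a, h b) \<in> R i}"
      using R_trans[of i] unfolding trans_def by blast
    show "irrefl {(a, b). (h a, h b) \<in> R i}"
      using R_irrefl[of i] unfolding irrefl_def by blast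
    show "total_on D {(a, b). (h a, h b) \<in> R i}"
      unfolding total_on_def
    proof (intro ballI impI)
      fix x y
      assume "x \<in> D" "y \<in> D" "x \<noteq> y"
      then have "h x \<in> D" "h y \<in> D" "h x \<noteq> h y"
        using h_mem \<open>inj h\<close> by (auto dest: injD)
      then show "(x, y) \<in> {(a, b). (h a, h b) \<in> R i} \<or> (y, x) \<in> {(a, b). (h a, h b) \<in> R i}"
        using R_total[of i] unfolding total_on_def by blast
    qed
  qed
  moreover have "(\<Inter>i. {(a, b). (h a, h b) \<in> R i}) = prod_order_rel D"
  proof -
    have "(a, b) \<in> (\<Inter>i. R i) \<longleftrightarrow> (a, b) \<in> prod_order_rel D" for a b
      using R unfolding Rn_def by blast
    moreover have "(h a, h b) \<in> prod_order_rel D \<longleftrightarrow> (a, b) \<in> prod_order_rel D" for a b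
      using h unfolding prod_order_rel_def Aut_def by (auto simp: h_mem)
    ultimately show ?thesis
      by blast
  qed
  ultimately show ?thesis
    unfolding Rn_def by blast
qed

lemma logic_action_Rn:
  assumes "g \<in> Aut D" "R \<in> Rn D"
  shows "logic_action g R \<in> Rn D"
  unfolding logic_action_def by (rule Rn_pullback[OF inv_Aut[OF assms(1)] assms(2)])

lemma logic_action_id: "logic_action id R = R"
  unfolding logic_action_def by simp

lemma logic_action_comp:
  assumes "g \<in> Aut D" "h \<in> Aut D"
  shows "logic_action (g \<circ> h) R = logic_action g (logic_action h R)"
proof -
  have "inv (g \<circ> h) = inv h \<circ> inv g"
    by (rule o_inv_distrib[OF Aut_bij[OF assms(1)] Aut_bij[OF assms(2)]])
  then show ?thesis
    unfolding logic_action_def by simp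
qed

lemma continuous_map_discrete_locally_constant:
  assumes "f \<in> topspace X \<rightarrow> U"
    and "\<And>x. x \<in> topspace X \<Longrightarrow> \<exists>T. openin X T \<and> x \<in> T \<and> (\<forall>y\<in>T. f y = f x)"
  shows "continuous_map X (discrete_topology U) f"
  unfolding continuous_map_def
proof (intro conjI allI impI)
  show "f \<in> topspace X \<rightarrow> topspace (discrete_topology U)"
    using assms(1) by simp
  fix W
  show "openin X {x \<in> topspace X. f x \<in> W}"
  proof (subst openin_subopen, intro ballI)
    fix x
    assume "x \<in> {x \<in> topspace X. f x \<in> W}"
    then have "x \<in> topspace X" "f x \<in> W"
      by simp_all
    then obtain T where T: "openin X T" "x \<in> T" "\<forall>y\<in>T. f y = f x"
      using assms(2) by blast
    have "T \<subseteq> {x \<in> topspace X. f x \<in> W}"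
    proof
      fix y
      assume "y \<in> T"
      then have "y \<in> topspace X" "f y = f x"
        using openin_subset[OF T(1)] T(3) by auto
      then show "y \<in> {x \<in> topspace X. f x \<in> W}"
        using \<open>f x \<in> W\<close> by simp
    qed
    then show "\<exists>T. openin X T \<and> x \<in> T \<and> T \<subseteq> {x \<in> topspace X. f x \<in> W}"
      using T by blast
  qed
qed

lemma continuous_map_into_rel_topology:
  assumes "f \<in> topspace X \<rightarrow> {r. r \<subseteq> D \<times> D}"
    and "\<And>q. q \<in> D \<times> D \<Longrightarrow> continuous_map X (discrete_topology UNIV) (\<lambda>x. q \<in> f x)"
  shows "continuous_map X (rel_topology D) f"
  unfolding rel_topology_def
proof (rule continuous_map_pullback')
  show "topspace X \<subseteq> f -` {r. r \<subseteq> D \<times> D}"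
    using assms(1) by auto
  have "continuous_map X (discrete_topology UNIV) (\<lambda>x. ((\<lambda>r. restrict (\<lambda>p. p \<in> r) (D \<times> D)) \<circ> f) x q)"
    if "q \<in> D \<times> D" for q
    using assms(2)[OF that] by (rule continuous_map_eq) (simp add: that)
  then show "continuous_map X (product_topology (\<lambda>_. discrete_topology UNIV) (D \<times> D))
      ((\<lambda>r. restrict (\<lambda>p. p \<in> r) (D \<times> D)) \<circ> f)"
    unfolding continuous_map_componentwise by auto
qed

lemma continuous_map_rel_topology_mem:
  assumes "q \<in> D \<times> D"
  shows "continuous_map (rel_topology D) (discrete_topology UNIV) (\<lambda>r. q \<in> r)"
proof -
  have "continuous_map (rel_topology D) (discrete_topology UNIV) ((\<lambda>k. k q) \<circ> (\<lambda>r. restrict (\<lambda>p. p \<in> r) (D \<times> D)))"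
    unfolding rel_topology_def by (intro continuous_map_pullback continuous_map_product_projection assms)
  then show ?thesis
    using assms by (simp add: o_def)
qed

lemma topspace_Aut_topology: "topspace (Aut_topology D) = Aut D"
  using Aut_mem_iff unfolding Aut_topology_def topspace_pullback_topology by fastforce

lemma topspace_Rn_topology: "topspace (Rn_topology D) = Rn D"
  unfolding Rn_topology_def rel_topology_def topspace_subtopology topspace_product_topology
    topspace_pullback_topology Rn_def by auto

lemma openin_Aut_topology_eval:
  assumes "x \<in> D" "y \<in> D"
  shows "openin (Aut_topology D) {g \<in> Aut D. g x = y}"
proof -
  have "continuous_map (Aut_topology D) (discrete_topology D) ((\<lambda>k. k x) \<circ> (\<lambda>g. restrict g D))"
    unfolding Aut_topology_def by (intro continuous_map_pullback continuous_map_product_projection assms)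
  then have "continuous_map (Aut_topology D) (discrete_topology D) (\<lambda>g. g x)"
    using assms by (simp add: o_def)
  from openin_continuous_map_preimage[OF this, of "{y}"] show ?thesis
    using assms by (simp add: topspace_Aut_topology)
qed

lemma openin_Rn_topology_mem:
  assumes "q \<in> D \<times> D"
  shows "openin (Rn_topology D) {R \<in> Rn D. (q \<in> R i) = v}"
proof -
  have "continuous_map (product_topology (\<lambda>_. rel_topology D) UNIV) (rel_topology D) (\<lambda>R. R i)"
    by (rule continuous_map_product_projection) simp
  from continuous_map_compose[OF this continuous_map_rel_topology_mem[OF assms]]
  have "continuous_map (Rn_topology D) (discrete_topology UNIV) (\<lambda>R. q \<in> R i)"
    unfolding Rn_topology_def by (simp add: o_def continuous_map_from_subtopology)
  from openin_continuous_map_preimage[OF this, of "{v}"] show ?thesis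
    by (simp add: topspace_Rn_topology)
qed

lemma continuous_logic_action_mem:
  assumes "a \<in> D" "b \<in> D"
  shows "continuous_map (prod_topology (Aut_topology D) (Rn_topology D)) (discrete_topology UNIV)
    (\<lambda>(g, R). (a, b) \<in> logic_action g R i)"
proof (rule continuous_map_discrete_locally_constant)
  let ?X = "prod_topology (Aut_topology D) (Rn_topology D)"
  let ?f = "\<lambda>(g, R). (a, b) \<in> logic_action g R i"
  fix x
  assume "x \<in> topspace ?X"
  then obtain g R where x: "x = (g, R)" "g \<in> Aut D" "R \<in> Rn D"
    by (auto simp: topspace_Aut_topology topspace_Rn_topology)
  define a' b' where "a' = inv g a" and "b' = inv g b"
  have "a' \<in> D" "b' \<in> D"
    unfolding a'_def b'_def using Aut_mem_iff[OF inv_Aut[OF x(2)]] assms by auto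
  define T where "T = ({h \<in> Aut D. h a' = a} \<inter> {h \<in> Aut D. h b' = b}) \<times>
    {S \<in> Rn D. ((a', b') \<in> S i) = ((a', b') \<in> R i)}"
  have "openin (Aut_topology D) ({h \<in> Aut D. h a' = a} \<inter> {h \<in> Aut D. h b' = b})"
    using \<open>a' \<in> D\<close> \<open>b' \<in> D\<close> assms by (intro openin_Int openin_Aut_topology_eval)
  moreover have "openin (Rn_topology D) {S \<in> Rn D. ((a', b') \<in> S i) = ((a', b') \<in> R i)}"
    using \<open>a' \<in> D\<close> \<open>b' \<in> D\<close> by (intro openin_Rn_topology_mem) simp
  ultimately have "openin ?X T"
    unfolding T_def openin_prod_Times_iff by blast
  moreover have "x \<in> T"
    using Aut_bij[OF x(2)] unfolding T_def x(1) a'_def b'_def by (simp add: x bij_is_surj surj_f_inv_f)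
  moreover have "?f y = ?f x" if "y \<in> T" for y
  proof -
    obtain h S where y: "y = (h, S)" "h \<in> Aut D" "h a' = a" "h b' = b"
      "((a', b') \<in> S i) = ((a', b') \<in> R i)"
      using \<open>y \<in> T\<close> unfolding T_def by auto
    then have "inv h a = a'" "inv h b = b'"
      using Aut_bij[OF y(2)] by (auto intro: inv_f_eq bij_is_inj)
    then show ?thesis
      unfolding x(1) y(1) logic_action_def a'_def b'_def by (simp add: y(5)[unfolded a'_def b'_def])
  qed
  ultimately show "\<exists>T. openin ?X T \<and> x \<in> T \<and> (\<forall>y\<in>T. ?f y = ?f x)"
    by blast
qed simp

lemma continuous_logic_action:
  "continuous_map (prod_topology (Aut_topology D) (Rn_topology D)) (Rn_topology D)
     (\<lambda>(g, R). logic_action g R)"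
proof -
  let ?X = "prod_topology (Aut_topology D) (Rn_topology D)"
  have action_in_Rn: "(\<lambda>(g, R). logic_action g R) \<in> topspace ?X \<rightarrow> Rn D"
  proof
    fix x
    assume "x \<in> topspace ?X"
    then obtain g R where "x = (g, R)" "g \<in> Aut D" "R \<in> Rn D"
      by (auto simp: topspace_Aut_topology topspace_Rn_topology)
    then show "(\<lambda>(g, R). logic_action g R) x \<in> Rn D"
      using logic_action_Rn[of g D R] by simp
  qed
  have "continuous_map ?X (rel_topology D) (\<lambda>x. (case x of (g, R) \<Rightarrow> logic_action g R) i)" for i
  proof (rule continuous_map_into_rel_topology)
    show "(\<lambda>x. (case x of (g, R) \<Rightarrow> logic_action g R) i) \<in> topspace ?X \<rightarrow> {r. r \<subseteq> D \<times> D}"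
    proof
      fix x
      assume "x \<in> topspace ?X"
      then have "(case x of (g, R) \<Rightarrow> logic_action g R) \<in> Rn D"
        using action_in_Rn by (rule funcset_mem[rotated])
      then show "(case x of (g, R) \<Rightarrow> logic_action g R) i \<in> {r. r \<subseteq> D \<times> D}"
        unfolding Rn_def by blast
    qed
    show "continuous_map ?X (discrete_topology UNIV) (\<lambda>x. q \<in> (case x of (g, R) \<Rightarrow> logic_action g R) i)"
      if "q \<in> D \<times> D" for q
      using continuous_logic_action_mem[of "fst q" D "snd q" i] that
      by (simp add: case_prod_unfold mem_Times_iff)
  qed
  then have "continuous_map ?X (product_topology (\<lambda>_. rel_topology D) UNIV) (\<lambda>(g, R). logic_action g R)"
    unfolding continuous_map_componentwise_UNIV by blast
  then show ?thesis
    using action_in_Rn unfolding Rn_topology_def continuous_map_in_subtopology by blast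
qed

lemma Rn_subset: "R \<in> Rn D \<Longrightarrow> (a, b) \<in> R i \<Longrightarrow> a \<in> D \<and> b \<in> D"
  unfolding Rn_def by blast

lemma Rn_trans: "R \<in> Rn D \<Longrightarrow> (a, b) \<in> R i \<Longrightarrow> (b, c) \<in> R i \<Longrightarrow> (a, c) \<in> R i"
  unfolding Rn_def strict_linear_order_on_def trans_def by blast

lemma Rn_irrefl: "R \<in> Rn D \<Longrightarrow> (a, a) \<notin> R i"
  unfolding Rn_def strict_linear_order_on_def irrefl_def by blast

lemma Rn_total: "R \<in> Rn D \<Longrightarrow> a \<in> D \<Longrightarrow> b \<in> D \<Longrightarrow> a \<noteq> b \<Longrightarrow> (a, b) \<in> R i \<or> (b, a) \<in> R i"
  unfolding Rn_def strict_linear_order_on_def total_on_def by blast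

lemma Rn_all_iff_prod_less:
  assumes "R \<in> Rn D" "a \<in> D" "b \<in> D"
  shows "(\<forall>i. (a, b) \<in> R i) \<longleftrightarrow> prod_less a b"
proof -
  have "(\<Inter>i. R i) = prod_order_rel D"
    using assms(1) unfolding Rn_def by blast
  then show ?thesis
    using assms(2,3) unfolding prod_order_rel_def by blast
qed

lemma Rn_less_mem:
  assumes "R \<in> Rn D" "a \<in> D" "b \<in> D" "\<forall>k. a k < b k"
  shows "(a, b) \<in> R i"
proof -
  have "prod_less a b"
    using assms(4) unfolding prod_less_def by (metis less_imp_le order.irrefl)
  then show ?thesis
    using Rn_all_iff_prod_less[OF assms(1-3)] by blast
qed

lemma Rn_le_mem:
  assumes "R \<in> Rn D" "a \<in> D" "b \<in> D" "a \<le> b" "a \<noteq> b"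
  shows "(a, b) \<in> R i"
proof -
  have "prod_less a b"
    using assms(4,5) unfolding prod_less_def le_fun_def by blast
  then show ?thesis
    using Rn_all_iff_prod_less[OF assms(1-3)] by blast
qed

definition coord_order :: "('n \<Rightarrow> 'a::ord) set \<Rightarrow> 'n \<Rightarrow> ('n \<Rightarrow> 'a) rel" where
  "coord_order D j = {(a, b). a \<in> D \<and> b \<in> D \<and> a j < b j}"

definition flipped :: "('n \<Rightarrow> 'a::ord) set \<Rightarrow> 'n \<Rightarrow> ('n \<Rightarrow> 'a) \<Rightarrow> ('n \<Rightarrow> 'a) \<Rightarrow> bool" where
  "flipped D j a b \<longleftrightarrow> a \<in> D \<and> b \<in> D \<and> b j < a j \<and> (\<forall>k. k \<noteq> j \<longrightarrow> a k < b k)"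

definition reversing :: "('i \<Rightarrow> 'a rel) \<Rightarrow> 'a \<Rightarrow> 'a \<Rightarrow> 'i set" where
  "reversing R a b = {i. (b, a) \<in> R i}"

lemma reversing_nonempty:
  assumes "R \<in> Rn D" "a \<in> D" "b \<in> D" "b m < a m"
  shows "reversing R a b \<noteq> {}"
proof -
  have "\<not> prod_less a b"
    using assms(4) unfolding prod_less_def by (meson leD)
  then obtain i where "(a, b) \<notin> R i"
    using Rn_all_iff_prod_less[OF assms(1-3)] by blast
  moreover have "a \<noteq> b"
    using assms(4) by auto
  ultimately have "(b, a) \<in> R i"
    using Rn_total[OF assms(1-3)] by blast
  then show ?thesis
    unfolding reversing_def by blast
qed

lemma reversing_disjoint:
  assumes "R \<in> Rn D" "\<forall>k. a k < b' k" "\<forall>k. a' k < b k"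
  shows "reversing R a b \<inter> reversing R a' b' = {}"
proof (rule ccontr)
  assume "reversing R a b \<inter> reversing R a' b' \<noteq> {}"
  then obtain i where i: "(b, a) \<in> R i" "(b', a') \<in> R i"
    unfolding reversing_def by blast
  then have "a \<in> D" "b \<in> D" "a' \<in> D" "b' \<in> D"
    using Rn_subset[OF assms(1)] by blast+
  then have "(a, b') \<in> R i" "(a', b) \<in> R i"
    using Rn_less_mem[OF assms(1)] assms(2,3) by blast+
  then have "(b, b) \<in> R i"
    using i Rn_trans[OF assms(1)] by meson
  then show False
    using Rn_irrefl[OF assms(1)] by blast
qed

lemma flipped_exists:
  assumes "dense_in_Qn D"
  shows "\<exists>a b. flipped D j a b"
proof -
  obtain a where "a \<in> D"
    using dense_in_Qn_nonempty[OF assms] by blast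
  have "(if k = j then a j - 1 else a k) < (if k = j then a j else a k + 1)" for k
    by simp
  from dense_in_QnE[of D "\<lambda>k. if k = j then a j - 1 else a k" "\<lambda>k. if k = j then a j else a k + 1",
      OF assms this]
  obtain b where "b \<in> D" "\<And>k. (if k = j then a j - 1 else a k) < b k"
    "\<And>k. b k < (if k = j then a j else a k + 1)"
    by blast
  then have "flipped D j a b"
    using \<open>a \<in> D\<close> unfolding flipped_def by (metis (full_types))
  then show ?thesis
    by blast
qed

lemma flipped_family_point:
  assumes dense: "dense_in_Qn D" and "a k < b k"
  shows "\<exists>x\<in>D. \<exists>y\<in>D. y k < x k \<and> x k < b k \<and> a k < y k \<and> (\<forall>m. m \<noteq> k \<longrightarrow> x m < L \<and> H < y m)"
proof -
  define c where "c = (a k + b k) / 2"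
  have "a k < c" "c < b k"
    using assms(2) unfolding c_def by simp_all
  obtain x where x: "x \<in> D" "c < x k" "x k < b k" "\<forall>m. m \<noteq> k \<longrightarrow> x m < L"
    using dense_in_Qn_single_coord[OF dense \<open>c < b k\<close>, of "L - 1" L k] by auto
  obtain y where y: "y \<in> D" "a k < y k" "y k < c" "\<forall>m. m \<noteq> k \<longrightarrow> H < y m"
    using dense_in_Qn_single_coord[OF dense \<open>a k < c\<close>, of H "H + 1" k] by auto
  show ?thesis
    using x y by (intro bexI[OF _ \<open>x \<in> D\<close>] bexI[OF _ \<open>y \<in> D\<close>]) auto
qed

lemma flipped_family:
  fixes D :: "('n::finite \<Rightarrow> rat) set"
  assumes dense: "dense_in_Qn D" and "flipped D j a b"
  shows "\<exists>x y. x j = a \<and> y j = b \<and> (\<forall>k. x k \<in> D \<and> y k \<in> D \<and> y k k < x k k) \<and>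
    (\<forall>k l m. k \<noteq> l \<longrightarrow> x k m < y l m)"
proof -
  have ab: "a \<in> D" "b \<in> D" "b j < a j" "\<And>k. k \<noteq> j \<Longrightarrow> a k < b k"
    using assms(2) unfolding flipped_def by auto
  obtain L H where L: "\<And>m. L < a m \<and> L < b m" and H: "\<And>m. a m < H \<and> b m < H"
    using strict_bounds_finite[of a b] by blast
  have "\<exists>x\<in>D. \<exists>y\<in>D. y k < x k \<and> x k < b k \<and> a k < y k \<and> (\<forall>m. m \<noteq> k \<longrightarrow> x m < L \<and> H < y m)"
    if "k \<noteq> j" for k
    using flipped_family_point[of D a k b, OF dense ab(4)[OF that]] .
  then obtain x0 y0 where xy0: "\<And>k. k \<noteq> j \<Longrightarrow> x0 k \<in> D \<and> y0 k \<in> D \<and> y0 k k < x0 k k \<and> x0 k k < b k \<and>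
      a k < y0 k k \<and> (\<forall>m. m \<noteq> k \<longrightarrow> x0 k m < L \<and> H < y0 k m)"
    by metis
  have x0_below: "x0 k m < b m \<and> x0 k m < H" and y0_above: "a m < y0 k m \<and> L < y0 k m"
    if "k \<noteq> j" for k m
    using xy0[OF that] L[of m] H[of m] H[of k] L[of k] by (cases "m = k"; force)+
  define x where "x = x0(j := a)"
  define y where "y = y0(j := b)"
  have "x k m < y l m" if "k \<noteq> l" for k l m
  proof (cases "k = j \<or> l = j")
    case True
    then show ?thesis
      using that x0_below y0_above unfolding x_def y_def by auto
  next
    case False
    then have "x0 k m < y0 l m"
      using xy0[of k] xy0[of l] x0_below[of k m] y0_above[of l m] that
      by (cases "m = k"; force)
    then show ?thesis
      using False unfolding x_def y_def by simp
  qed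
  moreover have "x k \<in> D \<and> y k \<in> D \<and> y k k < x k k" for k
    using ab xy0[of k] unfolding x_def y_def by (cases "k = j") auto
  ultimately show ?thesis
    unfolding x_def y_def by (intro exI[of _ x] exI[of _ y]) (simp add: x_def y_def)
qed

lemma reversing_flipped_singleton:
  fixes D :: "('n::finite \<Rightarrow> rat) set"
  assumes "R \<in> Rn D" "dense_in_Qn D" "flipped D j a b"
  shows "\<exists>i. reversing R a b = {i}"
proof -
  obtain x y where xy: "x j = a" "y j = b" "\<And>k. x k \<in> D \<and> y k \<in> D \<and> y k k < x k k"
    "\<And>k l m. k \<noteq> l \<Longrightarrow> x k m < y l m"
    using flipped_family[OF assms(2,3)] by blast
  have disjoint: "reversing R (x k) (y k) \<inter> reversing R (x l) (y l) = {}" if "k \<noteq> l" for k l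
    using reversing_disjoint[OF assms(1)] xy(4) that by (simp add: eq_commute)
  \<comment> \<open>n pairwise disjoint nonempty sets of indices out of n: each is a singleton\<close>
  define f where "f k = (SOME i. i \<in> reversing R (x k) (y k))" for k
  have f: "f k \<in> reversing R (x k) (y k)" for k
    unfolding f_def using reversing_nonempty[OF assms(1)] xy(3)[of k]
    by (metis all_not_in_conv someI_ex)
  have "inj f"
    using f disjoint by (metis disjoint_iff injI)
  then have "surj f"
    by (rule finite_UNIV_inj_surj[OF finite])
  have "reversing R a b = {f j}"
  proof
    show "{f j} \<subseteq> reversing R a b"
      using f[of j] xy(1,2) by simp
    show "reversing R a b \<subseteq> {f j}"
    proof
      fix i
      assume "i \<in> reversing R a b"
      moreover obtain k where "i = f k"
        using \<open>surj f\<close> by (metis surjD)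
      ultimately have "k = j"
        using f[of k] disjoint[of k j] xy(1,2) by blast
      then show "i \<in> {f j}"
        using \<open>i = f k\<close> by simp
    qed
  qed
  then show ?thesis
    by blast
qed

lemma reversing_flipped_nested:
  fixes D :: "('n::finite \<Rightarrow> rat) set"
  assumes R: "R \<in> Rn D" and "dense_in_Qn D" "flipped D j a b" "flipped D j c d" "c \<le> a" "b \<le> d"
  shows "reversing R c d = reversing R a b"
proof -
  have D: "a \<in> D" "b \<in> D" "c \<in> D" "d \<in> D"
    using assms(3,4) unfolding flipped_def by auto
  have "reversing R c d \<subseteq> reversing R a b"
  proof
    fix i
    assume "i \<in> reversing R c d"
    then have "(d, c) \<in> R i"
      unfolding reversing_def by simp
    moreover have "b = d \<or> (b, d) \<in> R i" "c = a \<or> (c, a) \<in> R i"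
      using Rn_le_mem[OF R] D \<open>c \<le> a\<close> \<open>b \<le> d\<close> by blast+
    ultimately have "(b, a) \<in> R i"
      using Rn_trans[OF R] by metis
    then show "i \<in> reversing R a b"
      unfolding reversing_def by simp
  qed
  moreover obtain i where "reversing R a b = {i}"
    using reversing_flipped_singleton[OF R assms(2,3)] by blast
  moreover have "reversing R c d \<noteq> {}"
    using reversing_flipped_singleton[OF R assms(2,4)] by auto
  ultimately show ?thesis
    by (metis subset_singletonD)
qed

lemma reversing_flipped_same_source:
  fixes D :: "('n::finite \<Rightarrow> rat) set"
  assumes R: "R \<in> Rn D" and dense: "dense_in_Qn D" and ab: "flipped D j a b" and ae: "flipped D j a e"
  shows "reversing R a b = reversing R a e"
proof -
  define lo where "lo k = (if k = j then min (b j) (e j) - 1 else a k)" for k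
  define hi where "hi k = (if k = j then min (b j) (e j) else min (b k) (e k))" for k
  have "lo k < hi k" for k
    using ab ae unfolding lo_def hi_def flipped_def by auto
  from dense_in_QnE[of D lo hi, OF dense this]
  obtain f where f: "f \<in> D" "\<And>k. lo k < f k" "\<And>k. f k < hi k"
    by blast
  have f_below: "f k < b k \<and> f k < e k" for k
    using f(3)[of k] unfolding hi_def by (cases "k = j") auto
  have "a k < f k" if "k \<noteq> j" for k
    using f(2)[of k] that unfolding lo_def by simp
  then have af: "flipped D j a f"
    using ab f(1) f_below[of j] unfolding flipped_def by auto
  have "f \<le> b" "f \<le> e"
    using f_below unfolding le_fun_def by (simp_all add: less_imp_le)
  then show ?thesis
    using reversing_flipped_nested[OF R dense af ab order.refl] reversing_flipped_nested[OF R dense af ae order.refl]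
    by simp
qed

lemma reversing_flipped_same_target:
  fixes D :: "('n::finite \<Rightarrow> rat) set"
  assumes R: "R \<in> Rn D" and dense: "dense_in_Qn D" and ae: "flipped D j a e" and a'e: "flipped D j a' e"
  shows "reversing R a e = reversing R a' e"
proof -
  define lo where "lo k = (if k = j then e j else min (a k) (a' k) - 1)" for k
  define hi where "hi k = (if k = j then min (a j) (a' j) else min (a k) (a' k))" for k
  have "lo k < hi k" for k
    using ae a'e unfolding lo_def hi_def flipped_def by auto
  from dense_in_QnE[of D lo hi, OF dense this]
  obtain g where g: "g \<in> D" "\<And>k. lo k < g k" "\<And>k. g k < hi k"
    by blast
  have g_below: "g k < a k \<and> g k < a' k" for k
    using g(3)[of k] unfolding hi_def by (cases "k = j") auto
  have "e j < g j"
    using g(2)[of j] unfolding lo_def by simp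
  then have ge: "flipped D j g e"
    using ae g(1) g_below unfolding flipped_def by (auto intro: order.strict_trans)
  have "g \<le> a" "g \<le> a'"
    using g_below unfolding le_fun_def by (simp_all add: less_imp_le)
  then show ?thesis
    using reversing_flipped_nested[OF R dense ae ge _ order.refl] reversing_flipped_nested[OF R dense a'e ge _ order.refl]
    by simp
qed

lemma reversing_flipped_eq:
  fixes D :: "('n::finite \<Rightarrow> rat) set"
  assumes R: "R \<in> Rn D" and dense: "dense_in_Qn D" and ab: "flipped D j a b" and a'b': "flipped D j a' b'"
  shows "reversing R a b = reversing R a' b'"
proof -
  define lo where "lo k = (if k = j then min (a j) (a' j) - 1 else max (a k) (a' k))" for k
  define hi where "hi k = (if k = j then min (a j) (a' j) else max (a k) (a' k) + 1)" for k
  have "lo k < hi k" for k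
    unfolding lo_def hi_def by auto
  from dense_in_QnE[of D lo hi, OF dense this]
  obtain e where e: "e \<in> D" "\<And>k. lo k < e k" "\<And>k. e k < hi k"
    by blast
  have "e j < a j \<and> e j < a' j"
    using e(3)[of j] unfolding hi_def by simp
  moreover have "a k < e k \<and> a' k < e k" if "k \<noteq> j" for k
    using e(2)[of k] that unfolding lo_def by simp
  ultimately have "flipped D j a e" "flipped D j a' e"
    using ab a'b' e(1) unfolding flipped_def by auto
  then show ?thesis
    using reversing_flipped_same_source[OF R dense] reversing_flipped_same_target[OF R dense] ab a'b'
    by metis
qed

lemma coord_order_subset_Rn:
  fixes D :: "('n::finite \<Rightarrow> rat) set"
  assumes R: "R \<in> Rn D" and dense: "dense_in_Qn D"
    and reversed: "\<And>a b. flipped D j a b \<Longrightarrow> (b, a) \<in> R i"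
  shows "coord_order D j \<subseteq> R i"
proof clarify
  fix a b
  assume "(a, b) \<in> coord_order D j"
  then have "a \<in> D" "b \<in> D" "a j < b j"
    unfolding coord_order_def by auto
  define lo where "lo k = (if k = j then a j else max (a k) (b k))" for k
  define hi where "hi k = (if k = j then b j else max (a k) (b k) + 1)" for k
  have "lo k < hi k" for k
    using \<open>a j < b j\<close> unfolding lo_def hi_def by auto
  from dense_in_QnE[of D lo hi, OF dense this]
  obtain z where z: "z \<in> D" "\<And>k. lo k < z k" "\<And>k. z k < hi k"
    by blast
  have "a k < z k" for k
    using z(2)[of k] unfolding lo_def by (cases "k = j") auto
  then have "(a, z) \<in> R i"
    using Rn_less_mem[OF R \<open>a \<in> D\<close> \<open>z \<in> D\<close>] by blast
  moreover have "b k < z k" if "k \<noteq> j" for k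
    using z(2)[of k] that unfolding lo_def by simp
  then have "flipped D j b z"
    using z(1) z(3)[of j] \<open>b \<in> D\<close> unfolding flipped_def hi_def by simp
  then have "(z, b) \<in> R i"
    by (rule reversed)
  ultimately show "(a, b) \<in> R i"
    using Rn_trans[OF R] by blast
qed

lemma Rn_eq_coord_order:
  fixes D :: "('n::finite \<Rightarrow> rat) set"
  assumes R: "R \<in> Rn D" and dense: "dense_in_Qn D" and no_common: "no_common_coord D"
    and reversed: "\<And>a b. flipped D j a b \<Longrightarrow> (b, a) \<in> R i"
  shows "R i = coord_order D j"
proof
  show sub: "coord_order D j \<subseteq> R i"
    using coord_order_subset_Rn[OF R dense reversed] .
  show "R i \<subseteq> coord_order D j"
  proof clarify
    fix a b
    assume ab: "(a, b) \<in> R i"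
    then have "a \<in> D" "b \<in> D" "a \<noteq> b"
      using Rn_subset[OF R] Rn_irrefl[OF R] by blast+
    then have "a j \<noteq> b j"
      using no_common unfolding no_common_coord_def by blast
    moreover have "\<not> b j < a j"
    proof
      assume "b j < a j"
      then have "(b, a) \<in> R i"
        using sub \<open>a \<in> D\<close> \<open>b \<in> D\<close> unfolding coord_order_def by blast
      then show False
        using ab Rn_trans[OF R] Rn_irrefl[OF R] by blast
    qed
    ultimately show "(a, b) \<in> coord_order D j"
      using \<open>a \<in> D\<close> \<open>b \<in> D\<close> unfolding coord_order_def by auto
  qed
qed

lemma coord_order_inj:
  assumes "dense_in_Qn D"
  shows "inj (coord_order D)"
proof (rule injI)
  fix j k
  assume eq: "coord_order D j = coord_order D k"
  show "j = k"
  proof (rule ccontr)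
    assume "j \<noteq> k"
    obtain a b where "flipped D k a b"
      using flipped_exists[OF assms] by blast
    then have "(a, b) \<in> coord_order D j" "(a, b) \<notin> coord_order D k"
      using \<open>j \<noteq> k\<close> unfolding flipped_def coord_order_def by auto
    then show False
      using eq by simp
  qed
qed

lemma Rn_eq_coord_orders:
  fixes D :: "('n::finite \<Rightarrow> rat) set"
  assumes R: "R \<in> Rn D" and dense: "dense_in_Qn D" and no_common: "no_common_coord D"
  shows "\<exists>t. bij t \<and> R = (\<lambda>i. coord_order D (t i))"
proof -
  have "\<exists>i. \<forall>a b. flipped D j a b \<longrightarrow> (b, a) \<in> R i" for j
  proof -
    obtain a0 b0 where "flipped D j a0 b0"
      using flipped_exists[OF dense] by blast
    moreover from this obtain i where "reversing R a0 b0 = {i}"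
      using reversing_flipped_singleton[OF R dense] by blast
    ultimately have "reversing R a b = {i}" if "flipped D j a b" for a b
      using reversing_flipped_eq[OF R dense that] by simp
    then show ?thesis
      unfolding reversing_def by blast
  qed
  then obtain s where "\<And>j a b. flipped D j a b \<Longrightarrow> (b, a) \<in> R (s j)"
    by metis
  then have R_s: "R (s j) = coord_order D j" for j
    using Rn_eq_coord_order[OF R dense no_common] by blast
  then have "inj s"
    using coord_order_inj[OF dense] by (metis injD injI)
  then have "bij s"
    using finite_UNIV_inj_surj[OF finite] by (simp add: bij_def)
  then have "R = (\<lambda>i. coord_order D (inv s i))"
    using R_s by (metis bij_inv_eq_iff)
  then show ?thesis
    using bij_imp_bij_inv[OF \<open>bij s\<close>] by blast
qed

definition coord_compatible ::
    "('i \<Rightarrow> 'i) \<Rightarrow> ('i \<Rightarrow> 'a::ord) \<Rightarrow> ('i \<Rightarrow> 'a) \<Rightarrow> ('i \<Rightarrow> 'a) \<Rightarrow> ('i \<Rightarrow> 'a) \<Rightarrow> bool" where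
  "coord_compatible p x x' y y' \<longleftrightarrow> (\<forall>j. x j < x' j \<longleftrightarrow> y (p j) < y' (p j))"

lemma coord_compatible_inv:
  assumes "bij p"
  shows "coord_compatible (inv p) y y' x x' \<longleftrightarrow> coord_compatible p x x' y y'"
  unfolding coord_compatible_def using assms by (metis bij_inv_eq_iff)

lemma coord_compatible_interpolate:
  fixes D :: "('n::finite \<Rightarrow> rat) set"
  assumes dense: "dense_in_Qn D" and "bij p" and "finite P"
    and P: "compatible_pairs (coord_compatible p) P"
  shows "\<exists>y0\<in>D. \<forall>(x, y)\<in>P. \<forall>j.
    (x j < x0 j \<longrightarrow> y (p j) < y0 (p j)) \<and> (x0 j < x j \<longrightarrow> y0 (p j) < y (p j))"
proof -
  have p_inv: "p (inv p m) = m" "inv p (p j) = j" for m j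
    using \<open>bij p\<close> by (simp_all add: bij_is_surj bij_is_inj surj_f_inv_f)
  have Q_P: "x j < x' j \<Longrightarrow> y (p j) < y' (p j)" if "(x, y) \<in> P" "(x', y') \<in> P" for x y x' y' j
    using P that unfolding compatible_pairs_def coord_compatible_def by blast
  define below where "below m = (\<lambda>q. snd q m) ` {q\<in>P. fst q (inv p m) < x0 (inv p m)}" for m
  define above where "above m = (\<lambda>q. snd q m) ` {q\<in>P. x0 (inv p m) < fst q (inv p m)}" for m
  have "\<exists>l h. l < h \<and> (\<forall>s\<in>below m. s \<le> l) \<and> (\<forall>t\<in>above m. h \<le> t)" for m
  proof (rule finite_sets_separated)
    show "finite (below m)" "finite (above m)"
      unfolding below_def above_def using \<open>finite P\<close> by simp_all
    show "\<forall>s\<in>below m. \<forall>t\<in>above m. s < t"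
      unfolding below_def above_def
      using Q_P[of _ _ _ _ "inv p m"] by (force simp: p_inv dest: order.strict_trans)
  qed
  then obtain l h where lh: "\<And>m. l m < h m" "\<And>m s. s \<in> below m \<Longrightarrow> s \<le> l m"
    "\<And>m t. t \<in> above m \<Longrightarrow> h m \<le> t"
    by metis
  obtain y0 where "y0 \<in> D" and y0: "\<And>m. l m < y0 m" "\<And>m. y0 m < h m"
    using dense_in_QnE[of D l h, OF dense lh(1)] by blast
  have "y (p j) < y0 (p j)" if "(x, y) \<in> P" "x j < x0 j" for x y j
  proof -
    have "y (p j) \<in> below (p j)"
      unfolding below_def p_inv using that by force
    then show ?thesis
      using lh(2) y0(1) by (meson order.strict_trans1)
  qed
  moreover have "y0 (p j) < y (p j)" if "(x, y) \<in> P" "x0 j < x j" for x y j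
  proof -
    have "y (p j) \<in> above (p j)"
      unfolding above_def p_inv using that by force
    then show ?thesis
      using lh(3) y0(2) by (meson order.strict_trans2)
  qed
  ultimately show ?thesis
    using \<open>y0 \<in> D\<close> by blast
qed

lemma coord_compatible_extend:
  fixes D :: "('n::finite \<Rightarrow> rat) set"
  assumes dense: "dense_in_Qn D" and no_common: "no_common_coord D" and "bij p"
    and "finite P" "P \<subseteq> D \<times> D" and P: "compatible_pairs (coord_compatible p) P" and "x0 \<in> D"
  shows "\<exists>y0\<in>D. compatible_pairs (coord_compatible p) (insert (x0, y0) P)"
proof (cases "x0 \<in> Domain P")
  case True
  then obtain y0 where "(x0, y0) \<in> P"
    by blast
  moreover from this have "y0 \<in> D"
    using \<open>P \<subseteq> D \<times> D\<close> by blast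
  ultimately show ?thesis
    using P by (metis insert_absorb)
next
  case False
  obtain y0 where "y0 \<in> D" and y0: "\<forall>(x, y)\<in>P. \<forall>j.
      (x j < x0 j \<longrightarrow> y (p j) < y0 (p j)) \<and> (x0 j < x j \<longrightarrow> y0 (p j) < y (p j))"
    using coord_compatible_interpolate[OF dense \<open>bij p\<close> \<open>finite P\<close> P] by blast
  have "coord_compatible p x0 x y0 y \<and> coord_compatible p x x0 y y0" if "(x, y) \<in> P" for x y
  proof -
    have "x \<in> D" "x \<noteq> x0"
      using that False \<open>P \<subseteq> D \<times> D\<close> by auto
    \<comment> \<open>no coordinate of x ties with x0, so the strict comparisons above are equivalences\<close>
    then have "x j < x0 j \<or> x0 j < x j" for j
      using no_common \<open>x0 \<in> D\<close> unfolding no_common_coord_def by (meson linorder_neqE)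
    moreover have "(x j < x0 j \<longrightarrow> y (p j) < y0 (p j)) \<and> (x0 j < x j \<longrightarrow> y0 (p j) < y (p j))" for j
      using y0 that by blast
    ultimately show ?thesis
      unfolding coord_compatible_def by (meson order.asym)
  qed
  then have "compatible_pairs (coord_compatible p) (insert (x0, y0) P)"
    using P unfolding compatible_pairs_insert by (auto simp: coord_compatible_def)
  then show ?thesis
    using \<open>y0 \<in> D\<close> by blast
qed

lemma compatible_pairs_coord_converse:
  fixes P :: "(('i \<Rightarrow> 'a::ord) \<times> ('i \<Rightarrow> 'a)) set"
  assumes "bij p"
  shows "compatible_pairs (coord_compatible (inv p)) (P\<inverse>) \<longleftrightarrow> compatible_pairs (coord_compatible p) P"
proof -
  have "(\<lambda>y y' x x'. coord_compatible p x x' y y') = (coord_compatible (inv p) :: ('i \<Rightarrow> 'a) \<Rightarrow> _)"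
    by (intro ext) (simp add: coord_compatible_inv[OF assms])
  then show ?thesis
    using compatible_pairs_converse[of "coord_compatible p" P] by simp
qed

lemma coord_compatible_extend_range:
  fixes D :: "('n::finite \<Rightarrow> rat) set"
  assumes dense: "dense_in_Qn D" and no_common: "no_common_coord D" and "bij p"
    and "finite P" "P \<subseteq> D \<times> D" and P: "compatible_pairs (coord_compatible p) P" and "y0 \<in> D"
  shows "\<exists>x0\<in>D. compatible_pairs (coord_compatible p) (insert (x0, y0) P)"
proof -
  have "finite (P\<inverse>)" "P\<inverse> \<subseteq> D \<times> D" "compatible_pairs (coord_compatible (inv p)) (P\<inverse>)"
    using assms(4-6) compatible_pairs_coord_converse[OF \<open>bij p\<close>] by auto
  then obtain x0 where "x0 \<in> D" "compatible_pairs (coord_compatible (inv p)) (insert (y0, x0) (P\<inverse>))"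
    using coord_compatible_extend[OF dense no_common bij_imp_bij_inv[OF \<open>bij p\<close>] _ _ _ \<open>y0 \<in> D\<close>]
    by blast
  moreover have "insert (y0, x0) (P\<inverse>) = (insert (x0, y0) P)\<inverse>"
    by auto
  ultimately show ?thesis
    using compatible_pairs_coord_converse[OF \<open>bij p\<close>] by auto
qed

lemma coord_compatible_bij_betw:
  fixes D :: "('n::finite \<Rightarrow> rat) set"
  assumes dense: "dense_in_Qn D" and no_common: "no_common_coord D" and "bij p"
  shows "\<exists>h. bij_betw h D D \<and> (\<forall>x\<in>D. \<forall>x'\<in>D. coord_compatible p x x' (h x) (h x'))"
proof -
  have "countable D"
    by (rule countableI_type)
  moreover have "D \<noteq> {}"
    using dense by (rule dense_in_Qn_nonempty)
  moreover have "x = x' \<longleftrightarrow> y = y'"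
    if "coord_compatible p x x' y y'" "coord_compatible p x' x y' y" for x x' y y' :: "'n \<Rightarrow> rat"
    using that \<open>bij p\<close> unfolding coord_compatible_def
    by (metis bij_inv_eq_iff ext linorder_neqE order.irrefl)
  ultimately show ?thesis
    using countable_back_and_forth[of D D "coord_compatible p"]
      coord_compatible_extend[OF dense no_common \<open>bij p\<close>]
      coord_compatible_extend_range[OF dense no_common \<open>bij p\<close>]
    by blast
qed

lemma Aut_permuting_coords:
  fixes D :: "('n::finite \<Rightarrow> rat) set"
  assumes dense: "dense_in_Qn D" and no_common: "no_common_coord D" and "bij p"
  shows "\<exists>g\<in>Aut D. \<forall>x\<in>D. \<forall>x'\<in>D. coord_compatible p x x' (g x) (g x')"
proof -
  obtain h where h: "bij_betw h D D" "\<forall>x\<in>D. \<forall>x'\<in>D. coord_compatible p x x' (h x) (h x')"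
    using coord_compatible_bij_betw[OF assms] by blast
  define g where "g x = (if x \<in> D then h x else x)" for x
  have "bij_betw g D D"
    using h(1) by (rule bij_betw_cong[THEN iffD1, rotated]) (simp add: g_def)
  moreover have "prod_less x x' \<longleftrightarrow> prod_less (g x) (g x')" if "x \<in> D" "x' \<in> D" for x x'
  proof -
    have "g x \<in> D" "g x' \<in> D"
      using \<open>bij_betw g D D\<close> that by (auto dest: bij_betwE)
    moreover have "(\<forall>j. x j < x' j) \<longleftrightarrow> (\<forall>j. g x (p j) < g x' (p j))"
      using h(2) that unfolding g_def coord_compatible_def by auto
    moreover have "(\<forall>j. g x (p j) < g x' (p j)) \<longleftrightarrow> (\<forall>m. g x m < g x' m)"
      using \<open>bij p\<close> by (metis bij_pointE)
    ultimately show ?thesis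
      using prod_less_iff_less_all[OF no_common] that by simp
  qed
  ultimately have "g \<in> Aut D"
    unfolding Aut_def by (auto simp: g_def)
  moreover have "\<forall>x\<in>D. \<forall>x'\<in>D. coord_compatible p x x' (g x) (g x')"
    using h(2) by (simp add: g_def)
  ultimately show ?thesis
    by blast
qed

lemma logic_action_coord_orders:
  assumes "g \<in> Aut D" and g: "\<forall>x\<in>D. \<forall>x'\<in>D. coord_compatible p x x' (g x) (g x')"
  shows "logic_action g (\<lambda>i. coord_order D (t i)) = (\<lambda>i. coord_order D (p (t i)))"
proof -
  have "(inv g a, inv g b) \<in> coord_order D (t i) \<longleftrightarrow> (a, b) \<in> coord_order D (p (t i))" for a b i
  proof (cases "a \<in> D \<and> b \<in> D")
    case True
    then have D: "inv g a \<in> D" "inv g b \<in> D" and inv: "g (inv g a) = a" "g (inv g b) = b"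
      using Aut_mem_iff[OF inv_Aut[OF \<open>g \<in> Aut D\<close>]] Aut_bij[OF \<open>g \<in> Aut D\<close>]
      by (auto simp: bij_is_surj surj_f_inv_f)
    have "inv g a (t i) < inv g b (t i) \<longleftrightarrow> g (inv g a) (p (t i)) < g (inv g b) (p (t i))"
      using g D unfolding coord_compatible_def by blast
    then show ?thesis
      using True D unfolding coord_order_def inv by simp
  next
    case False
    then show ?thesis
      using Aut_mem_iff[OF inv_Aut[OF \<open>g \<in> Aut D\<close>]] unfolding coord_order_def by auto
  qed
  then show ?thesis
    unfolding logic_action_def by auto
qed

lemma logic_action_transitive:
  fixes D :: "('n::finite \<Rightarrow> rat) set"
  assumes dense: "dense_in_Qn D" and no_common: "no_common_coord D" and "R \<in> Rn D" "S \<in> Rn D"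
  shows "\<exists>g\<in>Aut D. logic_action g R = S"
proof -
  obtain t where t: "bij t" "R = (\<lambda>i. coord_order D (t i))"
    using Rn_eq_coord_orders[OF \<open>R \<in> Rn D\<close> dense no_common] by blast
  obtain t' where t': "bij t'" "S = (\<lambda>i. coord_order D (t' i))"
    using Rn_eq_coord_orders[OF \<open>S \<in> Rn D\<close> dense no_common] by blast
  define p where "p = t' \<circ> inv t"
  have "bij p"
    unfolding p_def using t(1) t'(1) by (simp add: bij_comp bij_imp_bij_inv)
  then obtain g where g: "g \<in> Aut D" "\<forall>x\<in>D. \<forall>x'\<in>D. coord_compatible p x x' (g x) (g x')"
    using Aut_permuting_coords[OF dense no_common] by blast
  have "logic_action g R = (\<lambda>i. coord_order D (p (t i)))"
    unfolding t(2) by (rule logic_action_coord_orders[OF g])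
  also have "\<dots> = S"
    unfolding p_def t'(2) using t(1) by (simp add: bij_is_inj)
  finally show ?thesis
    using g(1) by blast
qed

theorem lemma6p6:
  fixes D :: "('n::finite \<Rightarrow> rat) set"
  assumes "CARD('n) \<ge> 2"
    and "dense_in_Qn D"
    and "no_common_coord D"
  shows "(\<forall>g\<in>Aut D. \<forall>R\<in>Rn D. logic_action g R \<in> Rn D)
    \<and> (\<forall>R\<in>Rn D. logic_action id R = R)
    \<and> (\<forall>g\<in>Aut D. \<forall>h\<in>Aut D. \<forall>R\<in>Rn D. logic_action (g \<circ> h) R = logic_action g (logic_action h R))
    \<and> continuous_map (prod_topology (Aut_topology D) (Rn_topology D)) (Rn_topology D)
        (\<lambda>(g, R). logic_action g R)
    \<and> (\<forall>R\<in>Rn D. \<forall>S\<in>Rn D. \<exists>g\<in>Aut D. logic_action g R = S)"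
proof (intro conjI ballI)
  show "logic_action g R \<in> Rn D" if "g \<in> Aut D" "R \<in> Rn D" for g R
    using that by (rule logic_action_Rn)
  show "logic_action id R = R" if "R \<in> Rn D" for R
    by (rule logic_action_id)
  show "logic_action (g \<circ> h) R = logic_action g (logic_action h R)" if "g \<in> Aut D" "h \<in> Aut D" for g h R
    using that by (rule logic_action_comp)
  show "continuous_map (prod_topology (Aut_topology D) (Rn_topology D)) (Rn_topology D)
      (\<lambda>(g, R). logic_action g R)"
    by (rule continuous_logic_action)
  show "\<exists>g\<in>Aut D. logic_action g R = S" if "R \<in> Rn D" "S \<in> Rn D" for R S
    using logic_action_transitive[OF assms(2,3) that] .
qed

end
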